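(* Let $B$ and its $D(\mathfrak{D}_4)$-action be as in the context with $(\alpha,\beta,\gamma)=(1,1,-1)$ and $u_1,u_2,u_3,u_4\in\Bbbk^\times$ satisfying $u_3^{16}=u_4^{16}$. Then the invariant subring $B^{D(\mathfrak{D}_4)}$ is generated as a $\Bbbk$-algebra by homogeneous elements of degree at most $14$.
   Context: Let $\Bbbk=\mathbb{C}$, $i=\sqrt{-1}$, $\mathfrak{D}_4=\langle r,s\mid r^4=e,\ s^2=r^2,\ rsrs^{-1}=e\rangle$. The Drinfeld double $D(G)$ has basis $\{\phi_gh\}$, multiplication $(\phi_g h)(\phi_{g'}h')=\delta_{g,hg'h^{-1}}\phi_g hh'$, comultiplication $\Delta(\phi_gh)=\sum_x\phi_xh\otimes\phi_{x^{-1}g}h$, counit $\epsilon(\phi_gh)=\delta_{g,e}$. A right $D(G)$-module algebra is a $G$-graded algebra with a right $G$-action by algebra automorphisms with $A_x\cdot g\subseteq A_{g^{-1}xg}$, $\phi_x$ projecting onto $A_x$; the invariant subring $A^{D(G)}$ consists of the $G$-fixed elements of $A_e$. The algebra $B$ is $\Bbbk\langle x_1,x_2,y_1,y_2,z_1,z_2\rangle$ (generators of degree 1) modulo $x_1x_2-\alpha x_2x_1$, $y_1y_2-\beta y_2y_1$, $z_1z_2-\gamma z_2z_1$, $x_1y_1-u_1y_1x_2$, $x_2y_1-u_1y_1x_1$, $x_1y_2+u_1y_2x_2$, $x_2y_2+u_1y_2x_1$, $x_1z_1-iu_2z_1x_2$, $x_2z_1-iu_2z_1x_1$, $ix_1z_2-u_2z_2x_2$,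 $ix_2z_2-u_2z_2x_1$, $y_1z_2-u_3z_2y_1$, $y_2z_1-u_3z_1y_2$, $y_1z_1-u_4z_1y_1$, $y_2z_2-u_4z_2y_2$. The $D(\mathfrak{D}_4)$-module algebra structure is given on generators by: $x_1$: grade $s$, $x_1\cdot r=x_2$, $x_1\cdot s=-ix_1$; $x_2$: grade $sr^2$, $x_2\cdot r=-x_1$, $x_2\cdot s=ix_2$; $y_1$: grade $sr$, $y_1\cdot r=-y_2$, $y_1\cdot s=y_2$; $y_2$: grade $sr^3$, $y_2\cdot r=-y_1$, $y_2\cdot s=y_1$; $z_1$: grade $sr$, $z_1\cdot r=-iz_2$, $z_1\cdot s=z_2$; $z_2$: grade $sr^3$, $z_2\cdot r=-iz_1$, $z_2\cdot s=-z_1$. *)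

theory Defs
  imports Complex_Main
begin

datatype gen = X1 | X2 | Y1 | Y2 | Z1 | Z2

type_synonym word = "gen list"
type_synonym fpoly = "word \<Rightarrow> complex"

definition fsupp :: "fpoly \<Rightarrow> word set" where
  "fsupp f = {w. f w \<noteq> 0}"

definition FA :: "fpoly set" where
  "FA = {f. finite (fsupp f)}"

definition mon :: "word \<Rightarrow> fpoly" where
  "mon w = (\<lambda>v. if v = w then 1 else 0)"

definition padd :: "fpoly \<Rightarrow> fpoly \<Rightarrow> fpoly" where
  "padd f g = (\<lambda>w. f w + g w)"

definition psub :: "fpoly \<Rightarrow> fpoly \<Rightarrow> fpoly" where
  "psub f g = (\<lambda>w. f w - g w)"

definition psmul :: "complex \<Rightarrow> fpoly \<Rightarrow> fpoly" where
  "psmul c f = (\<lambda>w. c * f w)"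

definition pmul :: "fpoly \<Rightarrow> fpoly \<Rightarrow> fpoly" where
  "pmul f g = (\<lambda>w. \<Sum>i\<in>{0..length w}. f (take i w) * g (drop i w))"

inductive_set ideal_gen :: "fpoly set \<Rightarrow> fpoly set" for R where
  zero: "(\<lambda>_. 0) \<in> ideal_gen R"
| gen: "r \<in> R \<Longrightarrow> pmul (mon u) (pmul r (mon v)) \<in> ideal_gen R"
| add: "f \<in> ideal_gen R \<Longrightarrow> g \<in> ideal_gen R \<Longrightarrow> padd f g \<in> ideal_gen R"
| smul: "f \<in> ideal_gen R \<Longrightarrow> psmul c f \<in> ideal_gen R"

inductive_set subalg :: "fpoly set \<Rightarrow> fpoly set" for S where
  one: "mon [] \<in> subalg S"
| base: "s \<in> S \<Longrightarrow> s \<in> subalg S"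
| add: "f \<in> subalg S \<Longrightarrow> g \<in> subalg S \<Longrightarrow> padd f g \<in> subalg S"
| smul: "f \<in> subalg S \<Longrightarrow> psmul c f \<in> subalg S"
| mul: "f \<in> subalg S \<Longrightarrow> g \<in> subalg S \<Longrightarrow> pmul f g \<in> subalg S"

definition homog :: "nat \<Rightarrow> fpoly \<Rightarrow> bool" where
  "homog d f \<longleftrightarrow> (\<forall>w. f w \<noteq> 0 \<longrightarrow> length w = d)"

definition rel :: "complex \<Rightarrow> gen \<Rightarrow> gen \<Rightarrow> complex \<Rightarrow> gen \<Rightarrow> gen \<Rightarrow> fpoly" where
  "rel c1 a b c2 d e = padd (psmul c1 (mon [a, b])) (psmul c2 (mon [d, e]))"

definition Brels :: "complex \<Rightarrow> complex \<Rightarrow> complex \<Rightarrow> complex \<Rightarrow> complex \<Rightarrow> complex \<Rightarrow> complex \<Rightarrow> fpoly set" where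
  "Brels \<alpha> \<beta> \<gamma> u1 u2 u3 u4 =
    { rel 1 X1 X2 (-\<alpha>) X2 X1,
      rel 1 Y1 Y2 (-\<beta>) Y2 Y1,
      rel 1 Z1 Z2 (-\<gamma>) Z2 Z1,
      rel 1 X1 Y1 (-u1) Y1 X2,
      rel 1 X2 Y1 (-u1) Y1 X1,
      rel 1 X1 Y2 u1 Y2 X2,
      rel 1 X2 Y2 u1 Y2 X1,
      rel 1 X1 Z1 (-\<i> * u2) Z1 X2,
      rel 1 X2 Z1 (-\<i> * u2) Z1 X1,
      rel \<i> X1 Z2 (-u2) Z2 X2,
      rel \<i> X2 Z2 (-u2) Z2 X1,
      rel 1 Y1 Z2 (-u3) Z2 Y1,
      rel 1 Y2 Z1 (-u3) Z1 Y2,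
      rel 1 Y1 Z1 (-u4) Z1 Y1,
      rel 1 Y2 Z2 (-u4) Z2 Y2 }"

section \<open>The group D_4 = <r,s | r^4 = e, s^2 = r^2, r s r s^{-1} = e>\<close>

text \<open>An element (a,b) stands for r^a s^b, with a < 4, b < 2.  Note s r = r^{-1} s.\<close>
type_synonym grp = "nat \<times> nat"

definition Grp :: "grp set" where
  "Grp = {0..<4} \<times> {0..<2}"

definition gmul :: "grp \<Rightarrow> grp \<Rightarrow> grp" where
  "gmul x y = (case x of (a, b) \<Rightarrow> case y of (c, d) \<Rightarrow>
     if b = 0 then ((a + c) mod 4, d)
     else if d = 0 then ((a + 3 * c) mod 4, 1)
     else ((a + 3 * c + 2) mod 4, 0))"

definition ge :: grp where "ge = (0, 0)"
definition gr :: grp where "gr = (1, 0)"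
definition gs :: grp where "gs = (0, 1)"

fun grade :: "gen \<Rightarrow> grp" where
  "grade X1 = gs"
| "grade X2 = gmul gs (gmul gr gr)"
| "grade Y1 = gmul gs gr"
| "grade Y2 = gmul gs (gmul gr (gmul gr gr))"
| "grade Z1 = gmul gs gr"
| "grade Z2 = gmul gs (gmul gr (gmul gr gr))"

definition wgrade :: "word \<Rightarrow> grp" where
  "wgrade w = foldr (\<lambda>x acc. gmul (grade x) acc) w ge"

definition proj_e :: "fpoly \<Rightarrow> fpoly" where
  "proj_e f = (\<lambda>w. if wgrade w = ge then f w else 0)"

text \<open>Action of r and s on generators: x . g = c * x'.\<close>
fun act_r :: "gen \<Rightarrow> complex \<times> gen" where
  "act_r X1 = (1, X2)"
| "act_r X2 = (-1, X1)"
| "act_r Y1 = (-1, Y2)"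
| "act_r Y2 = (-1, Y1)"
| "act_r Z1 = (-\<i>, Z2)"
| "act_r Z2 = (-\<i>, Z1)"

fun act_s :: "gen \<Rightarrow> complex \<times> gen" where
  "act_s X1 = (-\<i>, X1)"
| "act_s X2 = (\<i>, X2)"
| "act_s Y1 = (1, Y2)"
| "act_s Y2 = (1, Y1)"
| "act_s Z1 = (1, Z2)"
| "act_s Z2 = (-1, Z1)"

definition act_poly :: "(gen \<Rightarrow> complex \<times> gen) \<Rightarrow> fpoly \<Rightarrow> fpoly" where
  "act_poly m f = (\<lambda>v. \<Sum>w\<in>fsupp f.
      if map (snd \<circ> m) w = v then prod_list (map (fst \<circ> m) w) * f w else 0)"

definition act_g :: "grp \<Rightarrow> fpoly \<Rightarrow> fpoly" where
  "act_g g f = (case g of (a, b) \<Rightarrow> (act_poly act_s ^^ b) ((act_poly act_r ^^ a) f))"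

text \<open>f (a representative in the free algebra) represents an element of B^{D(G)}:
  its class lies in B_e and is fixed by every group element.\<close>
definition Binv :: "fpoly set \<Rightarrow> fpoly \<Rightarrow> bool" where
  "Binv R f \<longleftrightarrow> f \<in> FA \<and> psub f (proj_e f) \<in> ideal_gen R
      \<and> (\<forall>g\<in>Grp. psub (act_g g f) f \<in> ideal_gen R)"

end

theory Submission
  imports Defs "HOL-Library.Multiset"
begin

text \<open>
  Modulo the relations every monomial is a nonzero multiple of a normal word
  \<open>x\<^sub>1\<^sup>a x\<^sub>2\<^sup>b y\<^sub>1\<^sup>c y\<^sub>2\<^sup>d z\<^sub>1\<^sup>e z\<^sub>2\<^sup>f\<close>: the \<open>x\<^sub>i\<close> commute with each other, the \<open>y\<^sub>i, z\<^sub>i\<close> commute with each other,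
  and moving a \<open>y\<^sub>i\<close> or \<open>z\<^sub>i\<close> past \<open>x\<^sub>j\<close> turns \<open>x\<^sub>j\<close> into \<open>x\<^sub>3\<^sub>-\<^sub>j\<close>. Averaging over \<open>\<DD>\<^sub>4\<close>, an invariant is
  congruent to a combination of Reynolds images \<open>R(w)\<close> of normal words \<open>w\<close> of trivial grade, and such
  a \<open>w\<close> contains an even number of letters \<open>y\<^sub>i, z\<^sub>i\<close>, so its normal factors can be split off freely.

  If \<open>deg w \<ge> 15\<close>, then \<open>w\<close> contains a balanced factor \<open>m \<in> {x\<^sub>1\<^sup>2x\<^sub>2\<^sup>2, y\<^sub>1y\<^sub>2, z\<^sub>1z\<^sub>2}\<close>, which is
  invariant modulo the relations, so \<open>R(um) \<equiv> R(u) R(m)\<close>; or it contains \<open>t\<^sup>4\<close> for a single letter \<open>t\<close>,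
  and \<open>R(u) R(t\<^sup>4) = (R(ut\<^sup>4) + R(ut'\<^sup>4))/2\<close> with \<open>t'\<close> the partner of \<open>t\<close>, where \<open>ut'\<^sup>4\<close> contains a
  balanced factor. Induction on the degree shows that invariants of degree at most \<open>14\<close> generate.
\<close>

lemma FA_iff: "f \<in> FA \<longleftrightarrow> finite {w. f w \<noteq> 0}"
  by (simp add: FA_def fsupp_def)

lemma mon_in_FA [simp]: "mon w \<in> FA"
  by (simp add: FA_iff mon_def)

lemma zero_in_FA [simp]: "(\<lambda>_. 0) \<in> FA"
  by (simp add: FA_iff)

lemma padd_in_FA [simp]: "f \<in> FA \<Longrightarrow> g \<in> FA \<Longrightarrow> padd f g \<in> FA"
  unfolding FA_iff padd_def
  by (rule finite_subset[of _ "{w. f w \<noteq> 0} \<union> {w. g w \<noteq> 0}"]) auto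

lemma psmul_in_FA [simp]: "f \<in> FA \<Longrightarrow> psmul c f \<in> FA"
  unfolding FA_iff psmul_def
  by (rule finite_subset[of _ "{w. f w \<noteq> 0}"]) auto

lemma psub_eq_padd: "psub f g = padd f (psmul (-1) g)"
  by (simp add: psub_def padd_def psmul_def fun_eq_iff)

lemma psmul_psmul [simp]: "psmul a (psmul b f) = psmul (a * b) f"
  by (simp add: psmul_def fun_eq_iff)

lemma psmul_1 [simp]: "psmul 1 f = f"
  by (simp add: psmul_def)

lemma pmul_in_FA [simp]:
  assumes "f \<in> FA" "g \<in> FA"
  shows "pmul f g \<in> FA"
proof -
  let ?F = "{w. f w \<noteq> 0}" and ?G = "{w. g w \<noteq> 0}"
  have "{w. pmul f g w \<noteq> 0} \<subseteq> (\<lambda>(x, y). x @ y) ` (?F \<times> ?G)"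
  proof
    fix w assume "w \<in> {w. pmul f g w \<noteq> 0}"
    then obtain i where "f (take i w) * g (drop i w) \<noteq> 0"
      unfolding pmul_def by (auto elim: sum.not_neutral_contains_not_neutral)
    then show "w \<in> (\<lambda>(x, y). x @ y) ` (?F \<times> ?G)"
      by (intro image_eqI[of _ _ "(take i w, drop i w)"]) auto
  qed
  moreover have "finite ((\<lambda>(x, y). x @ y) ` (?F \<times> ?G))"
    using assms by (auto simp: FA_iff)
  ultimately show ?thesis
    by (auto simp: FA_iff intro: finite_subset)
qed

definition psum :: "'a set \<Rightarrow> ('a \<Rightarrow> fpoly) \<Rightarrow> fpoly" where
  "psum I F = (\<lambda>w. \<Sum>i\<in>I. F i w)"

lemma psum_insert:
  "finite I \<Longrightarrow> i \<notin> I \<Longrightarrow> psum (insert i I) F = padd (F i) (psum I F)"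
  by (simp add: psum_def padd_def fun_eq_iff)

lemma psum_in_FA [simp]: "finite I \<Longrightarrow> (\<And>i. i \<in> I \<Longrightarrow> F i \<in> FA) \<Longrightarrow> psum I F \<in> FA"
  by (induction rule: finite_induct) (simp_all add: psum_insert, simp add: psum_def)

lemma pmul_padd_left: "pmul (padd f g) h = padd (pmul f h) (pmul g h)"
  by (auto simp: pmul_def padd_def distrib_right sum.distrib)

lemma pmul_padd_right: "pmul h (padd f g) = padd (pmul h f) (pmul h g)"
  by (auto simp: pmul_def padd_def distrib_left sum.distrib)

lemma pmul_psmul_left: "pmul (psmul c f) h = psmul c (pmul f h)"
  by (auto simp: pmul_def psmul_def sum_distrib_left mult.assoc)

lemma pmul_psmul_right: "pmul h (psmul c f) = psmul c (pmul h f)"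
  by (auto simp: pmul_def psmul_def sum_distrib_left mult.left_commute)

lemma pmul_zero_left [simp]: "pmul (\<lambda>_. 0) h = (\<lambda>_. 0)"
  by (simp add: pmul_def)

lemma pmul_zero_right [simp]: "pmul h (\<lambda>_. 0) = (\<lambda>_. 0)"
  by (simp add: pmul_def)

lemma pmul_psum_left: "pmul (psum I F) G = psum I (\<lambda>i. pmul (F i) G)"
  by (simp add: psum_def pmul_def fun_eq_iff sum_distrib_right sum.swap[of _ I])

lemma pmul_mon_mon: "pmul (mon u) (mon v) = mon (u @ v)"
proof
  fix w
  have "pmul (mon u) (mon v) w = (\<Sum>i\<in>{0..length w}. if w = u @ v \<and> i = length u then 1 else 0)"
    unfolding pmul_def mon_def
    by (intro sum.cong refl) (auto simp: min_def append_eq_conv_conj)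
  then show "pmul (mon u) (mon v) w = mon (u @ v) w"
    by (cases "w = u @ v") (auto simp: mon_def)
qed

lemma pmul_mon_Nil_left [simp]: "pmul (mon []) f = f"
proof
  fix w
  have "pmul (mon []) f w = (\<Sum>i\<in>{0..length w}. if i = 0 then f w else 0)"
    unfolding pmul_def mon_def by (intro sum.cong refl) auto
  then show "pmul (mon []) f w = f w" by simp
qed

lemma pmul_mon_Nil_right [simp]: "pmul f (mon []) = f"
proof
  fix w
  have "pmul f (mon []) w = (\<Sum>i\<in>{0..length w}. if i = length w then f w else 0)"
    unfolding pmul_def mon_def by (intro sum.cong refl) auto
  then show "pmul f (mon []) w = f w" by simp
qed

lemma FA_induct [consumes 1, case_names zero step]:
  assumes "f \<in> FA" "P (\<lambda>_. 0)"
    and "\<And>g w c. g \<in> FA \<Longrightarrow> g w = 0 \<Longrightarrow> P g \<Longrightarrow> (\<forall>x. g x \<noteq> 0 \<longrightarrow> f x \<noteq> 0) \<Longrightarrow>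
           f w \<noteq> 0 \<Longrightarrow> c = f w \<Longrightarrow> P (padd (psmul c (mon w)) g)"
  shows "P f"
proof -
  have "\<forall>g. {w. g w \<noteq> 0} = S \<longrightarrow> (\<forall>x. g x \<noteq> 0 \<longrightarrow> f x \<noteq> 0) \<longrightarrow> (\<forall>x. g x \<noteq> 0 \<longrightarrow> g x = f x) \<longrightarrow> P g"
    if "finite S" for S
    using that
  proof (induction S)
    case empty
    then show ?case using assms(2) by (auto simp: fun_eq_iff)
  next
    case (insert w S)
    show ?case
    proof (intro allI impI)
      fix g
      assume g: "{w. g w \<noteq> 0} = insert w S" "\<forall>x. g x \<noteq> 0 \<longrightarrow> f x \<noteq> 0"
        "\<forall>x. g x \<noteq> 0 \<longrightarrow> g x = f x"
      let ?g = "g(w := 0)"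
      have "{x. ?g x \<noteq> 0} = S" using g(1) insert(2) by auto
      then have "P ?g" "?g \<in> FA" using insert g by (auto simp: FA_iff)
      moreover have "g w \<noteq> 0" using g(1) by auto
      ultimately have "P (padd (psmul (f w) (mon w)) ?g)"
        using assms(3)[of ?g w "f w"] g by auto
      moreover have "padd (psmul (f w) (mon w)) ?g = g"
        using g \<open>g w \<noteq> 0\<close> by (auto simp: fun_eq_iff padd_def psmul_def mon_def)
      ultimately show "P g" by simp
    qed
  qed
  then show ?thesis using assms(1) by (auto simp: FA_iff)
qed

lemma pmul_assoc:
  assumes "f \<in> FA" "g \<in> FA" "h \<in> FA"
  shows "pmul (pmul f g) h = pmul f (pmul g h)"
  using assms(1)
proof (induction rule: FA_induct)
  case (step f' w c)
  have "pmul (pmul (mon w) g) h = pmul (mon w) (pmul g h)"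
    using assms(2)
  proof (induction rule: FA_induct)
    case (step g' w2 c2)
    have "pmul (pmul (mon w) (mon w2)) h = pmul (mon w) (pmul (mon w2) h)"
      using assms(3)
      by (induction rule: FA_induct) (simp_all add: pmul_padd_right pmul_psmul_right pmul_mon_mon)
    with step show ?case
      by (simp add: pmul_padd_right pmul_padd_left pmul_psmul_right pmul_psmul_left)
  qed simp
  with step show ?case
    by (simp add: pmul_padd_left pmul_psmul_left)
qed simp

definition cong_mod :: "fpoly set \<Rightarrow> fpoly \<Rightarrow> fpoly \<Rightarrow> bool" where
  "cong_mod R f g \<longleftrightarrow> psub f g \<in> ideal_gen R"

lemma ideal_gen_psum:
  "finite I \<Longrightarrow> (\<And>i. i \<in> I \<Longrightarrow> F i \<in> ideal_gen R) \<Longrightarrow> psum I F \<in> ideal_gen R"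
  by (induction rule: finite_induct)
     (simp_all add: psum_insert ideal_gen.add, simp add: psum_def ideal_gen.zero)

lemma generator_in_ideal_gen: "r \<in> R \<Longrightarrow> r \<in> ideal_gen R"
  using ideal_gen.gen[of r R "[]" "[]"] by simp

lemma cong_mod_refl [simp]: "cong_mod R f f"
  using ideal_gen.zero by (simp add: cong_mod_def psub_def)

lemma cong_mod_sym: "cong_mod R f g \<Longrightarrow> cong_mod R g f"
proof -
  have "psub g f = psmul (-1) (psub f g)" by (simp add: psub_def psmul_def fun_eq_iff)
  then show "cong_mod R f g \<Longrightarrow> cong_mod R g f" by (simp add: cong_mod_def ideal_gen.smul)
qed

lemma cong_mod_trans: "cong_mod R f g \<Longrightarrow> cong_mod R g h \<Longrightarrow> cong_mod R f h"
proof -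
  have "psub f h = padd (psub f g) (psub g h)" by (simp add: psub_def padd_def fun_eq_iff)
  then show "cong_mod R f g \<Longrightarrow> cong_mod R g h \<Longrightarrow> cong_mod R f h"
    by (simp add: cong_mod_def ideal_gen.add)
qed

lemma cong_mod_padd: "cong_mod R f f' \<Longrightarrow> cong_mod R g g' \<Longrightarrow> cong_mod R (padd f g) (padd f' g')"
proof -
  have "psub (padd f g) (padd f' g') = padd (psub f f') (psub g g')"
    by (simp add: psub_def padd_def fun_eq_iff)
  then show "cong_mod R f f' \<Longrightarrow> cong_mod R g g' \<Longrightarrow> cong_mod R (padd f g) (padd f' g')"
    by (simp add: cong_mod_def ideal_gen.add)
qed

lemma cong_mod_psmul: "cong_mod R f f' \<Longrightarrow> cong_mod R (psmul c f) (psmul c f')"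
proof -
  have "psub (psmul c f) (psmul c f') = psmul c (psub f f')"
    by (simp add: psub_def psmul_def fun_eq_iff algebra_simps)
  then show "cong_mod R f f' \<Longrightarrow> cong_mod R (psmul c f) (psmul c f')"
    by (simp add: cong_mod_def ideal_gen.smul)
qed

lemma cong_mod_half: "cong_mod R g f \<Longrightarrow> cong_mod R f (psmul (1/2) (padd f g))"
proof -
  assume "cong_mod R g f"
  then have "cong_mod R (psmul (1/2) (padd f g)) (psmul (1/2) (padd f f))"
    by (intro cong_mod_psmul cong_mod_padd cong_mod_refl)
  moreover have "psmul (1/2) (padd f f) = f"
    by (simp add: psmul_def padd_def fun_eq_iff)
  ultimately show ?thesis
    by (simp add: cong_mod_sym)
qed

context
  fixes R :: "fpoly set"
  assumes R_FA: "R \<subseteq> FA"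
begin

lemma ideal_gen_FA: "f \<in> ideal_gen R \<Longrightarrow> f \<in> FA"
  by (induction rule: ideal_gen.induct) (use R_FA in auto)

lemma ideal_gen_pmul_mon_left: "f \<in> ideal_gen R \<Longrightarrow> pmul (mon u) f \<in> ideal_gen R"
proof (induction rule: ideal_gen.induct)
  case (gen r u' v)
  have "pmul (mon u) (pmul (mon u') (pmul r (mon v))) = pmul (mon (u @ u')) (pmul r (mon v))"
    using gen R_FA by (subst pmul_assoc[symmetric]) (auto simp: pmul_mon_mon)
  then show ?case using gen by (simp add: ideal_gen.gen)
qed (simp_all add: pmul_padd_right pmul_psmul_right ideal_gen.intros)

lemma ideal_gen_pmul_mon_right: "f \<in> ideal_gen R \<Longrightarrow> pmul f (mon u) \<in> ideal_gen R"
proof (induction rule: ideal_gen.induct)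
  case (gen r u' v)
  have "pmul (pmul (mon u') (pmul r (mon v))) (mon u) = pmul (mon u') (pmul r (mon (v @ u)))"
    using gen R_FA by (auto simp: pmul_assoc pmul_mon_mon)
  then show ?case using gen by (simp add: ideal_gen.gen)
qed (simp_all add: pmul_padd_left pmul_psmul_left ideal_gen.intros)

lemma ideal_gen_pmul_left: "h \<in> FA \<Longrightarrow> f \<in> ideal_gen R \<Longrightarrow> pmul h f \<in> ideal_gen R"
  by (induction rule: FA_induct)
     (simp_all add: pmul_padd_left pmul_psmul_left ideal_gen.intros ideal_gen_pmul_mon_left)

lemma ideal_gen_pmul_right: "h \<in> FA \<Longrightarrow> f \<in> ideal_gen R \<Longrightarrow> pmul f h \<in> ideal_gen R"
  by (induction rule: FA_induct)
     (simp_all add: pmul_padd_right pmul_psmul_right ideal_gen.intros ideal_gen_pmul_mon_right)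

lemma cong_mod_pmul:
  assumes "f' \<in> FA" "g \<in> FA" "cong_mod R f f'" "cong_mod R g g'"
  shows "cong_mod R (pmul f g) (pmul f' g')"
proof -
  have "psub (pmul f g) (pmul f' g') = padd (pmul (psub f f') g) (pmul f' (psub g g'))"
    by (simp add: psub_def padd_def pmul_def fun_eq_iff algebra_simps sum_subtractf)
  then show ?thesis
    using assms by (simp add: cong_mod_def ideal_gen_pmul_left ideal_gen_pmul_right ideal_gen.add)
qed

end

type_synonym subst = "gen \<Rightarrow> complex \<times> gen"

lemma act_poly_superset:
  assumes "finite W" "fsupp f \<subseteq> W"
  shows "act_poly m f v =
    (\<Sum>w\<in>W. if map (snd \<circ> m) w = v then prod_list (map (fst \<circ> m) w) * f w else 0)"
  unfolding act_poly_def
  by (rule sum.mono_neutral_left) (use assms in \<open>auto simp: fsupp_def\<close>)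

lemma act_poly_padd:
  assumes "f \<in> FA" "g \<in> FA"
  shows "act_poly m (padd f g) = padd (act_poly m f) (act_poly m g)"
proof
  fix v
  let ?W = "fsupp f \<union> fsupp g"
  have W: "finite ?W" using assms by (simp add: FA_def)
  have "fsupp (padd f g) \<subseteq> ?W" by (auto simp: fsupp_def padd_def)
  then show "act_poly m (padd f g) v = padd (act_poly m f) (act_poly m g) v"
    using act_poly_superset[OF W, of f m v] act_poly_superset[OF W, of g m v]
    by (simp add: act_poly_superset[OF W] padd_def sum.distrib[symmetric] distrib_left
        if_distrib cong: if_cong)
qed

lemma act_poly_psmul:
  assumes "f \<in> FA"
  shows "act_poly m (psmul c f) = psmul c (act_poly m f)"
proof
  fix v
  have W: "finite (fsupp f)" using assms by (simp add: FA_def)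
  have "fsupp (psmul c f) \<subseteq> fsupp f" by (auto simp: fsupp_def psmul_def)
  then show "act_poly m (psmul c f) v = psmul c (act_poly m f) v"
    by (simp add: act_poly_superset[OF W] psmul_def sum_distrib_left if_distrib
        mult.left_commute cong: if_cong)
qed

lemma act_poly_zero [simp]: "act_poly m (\<lambda>_. 0) = (\<lambda>_. 0)"
  by (simp add: act_poly_def fsupp_def)

lemma act_poly_mon:
  "act_poly m (mon w) = psmul (prod_list (map (fst \<circ> m) w)) (mon (map (snd \<circ> m) w))"
proof -
  have "fsupp (mon w) = {w}" by (auto simp: fsupp_def mon_def)
  then show ?thesis by (auto simp: act_poly_def psmul_def mon_def fun_eq_iff)
qed

lemma act_poly_psmul_mon:
  "act_poly m (psmul c (mon w)) = psmul (c * prod_list (map (fst \<circ> m) w)) (mon (map (snd \<circ> m) w))"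
  by (simp add: act_poly_psmul act_poly_mon)

lemma act_poly_in_FA [simp]: "f \<in> FA \<Longrightarrow> act_poly m f \<in> FA"
  by (induction rule: FA_induct) (simp_all add: act_poly_padd act_poly_psmul act_poly_mon)

lemma act_poly_pmul:
  assumes "f \<in> FA" "g \<in> FA"
  shows "act_poly m (pmul f g) = pmul (act_poly m f) (act_poly m g)"
  using assms(1)
proof (induction rule: FA_induct)
  case (step f' w c)
  have "act_poly m (pmul (mon w) g) = pmul (act_poly m (mon w)) (act_poly m g)"
    using assms(2)
  proof (induction rule: FA_induct)
    case (step g' w2 c2)
    then show ?case
      by (simp add: pmul_padd_right pmul_psmul_right act_poly_padd act_poly_psmul
          pmul_psmul_left pmul_mon_mon act_poly_mon)
         (simp add: psmul_def padd_def fun_eq_iff mult_ac)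
  qed simp
  with step assms(2) show ?case
    by (simp add: pmul_padd_left pmul_psmul_left act_poly_padd act_poly_psmul)
qed simp

lemma act_poly_psum:
  "finite I \<Longrightarrow> (\<And>i. i \<in> I \<Longrightarrow> F i \<in> FA) \<Longrightarrow> act_poly m (psum I F) = psum I (\<lambda>i. act_poly m (F i))"
  by (induction rule: finite_induct)
     (simp_all add: psum_insert act_poly_padd, simp add: psum_def)

definition subst_comp :: "subst \<Rightarrow> subst \<Rightarrow> subst" where
  "subst_comp m m' t = (fst (m t) * fst (m' (snd (m t))), snd (m' (snd (m t))))"

definition subst_id :: subst where
  "subst_id t = (1, t)"

lemma act_poly_comp: "f \<in> FA \<Longrightarrow> act_poly m' (act_poly m f) = act_poly (subst_comp m m') f"
proof (induction rule: FA_induct)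
  case (step g w c)
  have "prod_list (map (fst \<circ> m) w) * prod_list (map (fst \<circ> m') (map (snd \<circ> m) w))
      = prod_list (map (fst \<circ> subst_comp m m') w)"
    by (induction w) (auto simp: subst_comp_def)
  moreover have "map (snd \<circ> m') (map (snd \<circ> m) w) = map (snd \<circ> subst_comp m m') w"
    by (simp add: subst_comp_def)
  ultimately have "act_poly m' (act_poly m (mon w)) = act_poly (subst_comp m m') (mon w)"
    by (simp add: act_poly_mon act_poly_psmul del: map_map)
  with step show ?case by (simp add: act_poly_padd act_poly_psmul)
qed simp

lemma act_poly_id: "f \<in> FA \<Longrightarrow> act_poly subst_id f = f"
proof (induction rule: FA_induct)
  case (step g w c)
  have "prod_list (map (\<lambda>_. 1::complex) w) = 1" by (induction w) auto
  then have "act_poly subst_id (mon w) = mon w"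
    by (simp add: act_poly_mon subst_id_def comp_def)
  with step show ?case by (simp add: act_poly_padd act_poly_psmul)
qed simp

lemma act_poly_ideal_gen:
  assumes "R \<subseteq> FA" and "\<And>r. r \<in> R \<Longrightarrow> act_poly m r \<in> ideal_gen R"
  shows "f \<in> ideal_gen R \<Longrightarrow> act_poly m f \<in> ideal_gen R"
proof (induction rule: ideal_gen.induct)
  case (gen r u v)
  have "r \<in> FA" using gen assms(1) by auto
  then have "act_poly m (pmul (mon u) (pmul r (mon v))) =
     pmul (act_poly m (mon u)) (pmul (act_poly m r) (act_poly m (mon v)))"
    by (simp add: act_poly_pmul)
  then show ?case
    using assms gen by (simp add: ideal_gen_pmul_left ideal_gen_pmul_right)
qed (use ideal_gen_FA[OF assms(1)] in \<open>simp_all add: act_poly_padd act_poly_psmul ideal_gen.intros\<close>)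

section \<open>The action of the dihedral group\<close>

lemma all_gen: "(\<forall>t. P t) \<longleftrightarrow> P X1 \<and> P X2 \<and> P Y1 \<and> P Y2 \<and> P Z1 \<and> P Z2"
  by (metis gen.exhaust)

lemma ex_gen: "(\<exists>t. P t) \<longleftrightarrow> P X1 \<or> P X2 \<or> P Y1 \<or> P Y2 \<or> P Z1 \<or> P Z2"
  by (metis gen.exhaust)

lemma Grp_eq: "Grp = {(0,0), (1,0), (2,0), (3,0), (0,1), (1,1), (2,1), (3,1)}"
  unfolding Grp_def by (auto simp: atLeastLessThan_def lessThan_def atLeast_def)

lemma finite_Grp [simp]: "finite Grp"
  by (simp add: Grp_def)

lemma card_Grp: "card Grp = 8"
  by (simp add: Grp_eq)

lemma subst_comp_assoc: "subst_comp (subst_comp m1 m2) m3 = subst_comp m1 (subst_comp m2 m3)"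
  by (simp add: subst_comp_def fun_eq_iff mult.assoc)

lemma subst_comp_id [simp]: "subst_comp subst_id m = m" "subst_comp m subst_id = m"
  by (simp_all add: subst_comp_def subst_id_def fun_eq_iff)

definition subst_rpow :: "nat \<Rightarrow> subst" where
  "subst_rpow a = ((\<lambda>m. subst_comp m act_r) ^^ a) subst_id"

definition subst_of :: "grp \<Rightarrow> subst" where
  "subst_of g = (case g of (a, b) \<Rightarrow> ((\<lambda>m. subst_comp m act_s) ^^ b) (subst_rpow a))"

lemma subst_rpow_add: "subst_rpow (a + b) = subst_comp (subst_rpow a) (subst_rpow b)"
  by (induction b) (simp_all add: subst_rpow_def subst_comp_assoc[symmetric])

lemma subst_rpow_3:
  "subst_rpow 3 = (\<lambda>t. case t of X1 \<Rightarrow> (-1, X2) | X2 \<Rightarrow> (1, X1) | Y1 \<Rightarrow> (-1, Y2) | Y2 \<Rightarrow> (-1, Y1)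
     | Z1 \<Rightarrow> (\<i>, Z2) | Z2 \<Rightarrow> (\<i>, Z1))"
  by (simp add: subst_rpow_def fun_eq_iff all_gen subst_comp_def subst_id_def numeral_3_eq_3)

lemma subst_rpow_4: "subst_rpow 4 = subst_id"
  by (simp add: subst_rpow_add[of 3 1, simplified] subst_rpow_3)
     (simp add: subst_rpow_def fun_eq_iff all_gen subst_comp_def subst_id_def)

lemma subst_s_s: "subst_comp act_s act_s = subst_rpow 2"
  by (simp add: subst_rpow_def fun_eq_iff all_gen subst_comp_def subst_id_def numeral_2_eq_2)

lemma subst_s_r: "subst_comp act_s act_r = subst_comp (subst_rpow 3) act_s"
  by (simp add: subst_rpow_3 fun_eq_iff all_gen subst_comp_def)

lemma subst_rpow_mod: "subst_rpow (a mod 4) = subst_rpow a"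
proof (induction a rule: less_induct)
  case (less a)
  show ?case
  proof (cases "a < 4")
    case False
    then have "subst_rpow a = subst_rpow (a - 4)"
      using subst_rpow_add[of "a - 4" 4] by (simp add: subst_rpow_4)
    with False less show ?thesis by (simp add: mod_if)
  qed simp
qed

lemma subst_of_rot: "subst_of (a, 0) = subst_rpow a"
  by (simp add: subst_of_def)

lemma subst_of_refl: "subst_of (a, Suc 0) = subst_comp (subst_rpow a) act_s"
  by (simp add: subst_of_def)

lemma subst_of_r: "g \<in> Grp \<Longrightarrow> subst_comp (subst_of g) act_r = subst_of (gmul g gr)"
proof (cases g)
  case (Pair a b)
  assume "g \<in> Grp"
  then have "b = 0 \<or> b = 1" using Pair by (auto simp: Grp_def)
  then show ?thesis
  proof
    assume "b = 0"
    have "subst_comp (subst_rpow a) act_r = subst_rpow (Suc a)"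
      by (simp add: subst_rpow_def)
    then show ?thesis
      using Pair \<open>b = 0\<close> by (simp add: subst_of_rot gmul_def gr_def subst_rpow_mod)
  next
    assume "b = 1"
    have "subst_comp (subst_comp (subst_rpow a) act_s) act_r = subst_comp (subst_rpow (a + 3)) act_s"
      by (simp add: subst_comp_assoc subst_s_r subst_rpow_add)
    then show ?thesis
      using Pair \<open>b = 1\<close> by (simp add: subst_of_refl gmul_def gr_def subst_rpow_mod)
  qed
qed

lemma subst_of_s: "g \<in> Grp \<Longrightarrow> subst_comp (subst_of g) act_s = subst_of (gmul g gs)"
proof (cases g)
  case (Pair a b)
  assume "g \<in> Grp"
  then have "b = 0 \<or> b = 1" "a < 4" using Pair by (auto simp: Grp_def)
  then show ?thesis
  proof (elim disjE)
    assume "b = 0"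
    then show ?thesis
      using Pair \<open>a < 4\<close> by (simp add: subst_of_rot subst_of_refl gmul_def gs_def)
  next
    assume "b = 1"
    have "subst_comp (subst_comp (subst_rpow a) act_s) act_s = subst_rpow (a + 2)"
      by (simp only: subst_comp_assoc subst_s_s subst_rpow_add)
    then show ?thesis
      using Pair \<open>b = 1\<close> by (simp add: subst_of_rot subst_of_refl gmul_def gs_def subst_rpow_mod)
  qed
qed

lemma act_poly_funpow:
  "f \<in> FA \<Longrightarrow> (act_poly m' ^^ n) (act_poly m f) = act_poly (((\<lambda>m. subst_comp m m') ^^ n) m) f"
  by (induction n) (auto simp: act_poly_comp)

lemma act_g_eq_act_poly: "f \<in> FA \<Longrightarrow> act_g g f = act_poly (subst_of g) f"
  by (cases g) (simp add: act_g_def subst_of_def subst_rpow_def act_poly_funpow[symmetric] act_poly_id)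

lemma act_g_in_FA [simp]: "f \<in> FA \<Longrightarrow> act_g g f \<in> FA"
  by (simp add: act_g_eq_act_poly)

lemma bij_betw_gmul_gr: "bij_betw (\<lambda>g. gmul g gr) Grp Grp"
  unfolding bij_betw_def inj_on_def Grp_eq by (auto simp: gmul_def gr_def)

lemma bij_betw_gmul_gs: "bij_betw (\<lambda>g. gmul g gs) Grp Grp"
  unfolding bij_betw_def inj_on_def Grp_eq by (auto simp: gmul_def gs_def)

section \<open>The Reynolds operator\<close>

definition reynolds :: "fpoly \<Rightarrow> fpoly" where
  "reynolds F = psmul (1/8) (psum Grp (\<lambda>g. act_g g F))"

lemma reynolds_in_FA [simp]: "F \<in> FA \<Longrightarrow> reynolds F \<in> FA"
  by (simp add: reynolds_def)

lemma act_poly_reynolds: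
  assumes F: "F \<in> FA"
    and law: "\<And>g. g \<in> Grp \<Longrightarrow> subst_comp (subst_of g) m = subst_of (h g)"
    and h: "bij_betw h Grp Grp"
  shows "act_poly m (reynolds F) = reynolds F"
proof -
  have "act_poly m (act_g g F) = act_g (h g) F" if "g \<in> Grp" for g
    using F that law by (simp add: act_g_eq_act_poly act_poly_comp)
  then have "act_poly m (psum Grp (\<lambda>g. act_g g F)) = psum Grp (\<lambda>g. act_g (h g) F)"
    using F by (simp add: act_poly_psum) (simp add: psum_def)
  also have "\<dots> = psum Grp (\<lambda>g. act_g g F)"
    unfolding psum_def by (rule ext, rule sum.reindex_bij_betw[OF h])
  finally show ?thesis
    using F by (simp add: reynolds_def act_poly_psmul)
qed

lemma act_g_reynolds: "F \<in> FA \<Longrightarrow> act_g g (reynolds F) = reynolds F"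
proof -
  assume F: "F \<in> FA"
  have "(act_poly act_r ^^ n) (reynolds F) = reynolds F" for n
    by (induction n) (simp_all add: act_poly_reynolds[OF F subst_of_r bij_betw_gmul_gr])
  moreover have "(act_poly act_s ^^ n) (reynolds F) = reynolds F" for n
    by (induction n) (simp_all add: act_poly_reynolds[OF F subst_of_s bij_betw_gmul_gs])
  ultimately show ?thesis
    by (cases g) (simp add: act_g_def)
qed

lemma reynolds_padd: "F \<in> FA \<Longrightarrow> G \<in> FA \<Longrightarrow> reynolds (padd F G) = padd (reynolds F) (reynolds G)"
  by (simp add: reynolds_def act_g_eq_act_poly act_poly_padd)
     (simp add: psum_def padd_def psmul_def sum.distrib algebra_simps)

lemma reynolds_psmul: "F \<in> FA \<Longrightarrow> reynolds (psmul c F) = psmul c (reynolds F)"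
  by (simp add: reynolds_def act_g_eq_act_poly act_poly_psmul)
     (simp add: psum_def psmul_def sum_distrib_left algebra_simps)

lemma reynolds_psub: "F \<in> FA \<Longrightarrow> G \<in> FA \<Longrightarrow> reynolds (psub F G) = psub (reynolds F) (reynolds G)"
  by (simp add: psub_eq_padd reynolds_padd reynolds_psmul)

lemma reynolds_zero [simp]: "reynolds (\<lambda>_. 0) = (\<lambda>_. 0)"
  using reynolds_psmul[of "\<lambda>_. 0" 0] by (simp add: psmul_def)

lemma reynolds_pmul_invariant:
  assumes "F \<in> FA" "G \<in> FA" "\<And>g. g \<in> Grp \<Longrightarrow> act_g g G = G"
  shows "reynolds (pmul F G) = pmul (reynolds F) G"
proof -
  have "psum Grp (\<lambda>g. act_g g (pmul F G)) = psum Grp (\<lambda>g. pmul (act_g g F) G)"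
    using assms by (simp add: psum_def act_g_eq_act_poly act_poly_pmul)
  then show ?thesis
    by (simp add: reynolds_def pmul_psmul_left pmul_psum_left)
qed

lemma reynolds_pmul_reynolds:
  "F \<in> FA \<Longrightarrow> G \<in> FA \<Longrightarrow> reynolds (pmul F (reynolds G)) = pmul (reynolds F) (reynolds G)"
  by (simp add: reynolds_pmul_invariant act_g_reynolds)

lemma cong_mod_reynolds:
  assumes "f \<in> FA" "\<And>g. g \<in> Grp \<Longrightarrow> psub (act_g g f) f \<in> ideal_gen R"
  shows "cong_mod R f (reynolds f)"
proof -
  have "(\<Sum>g\<in>Grp. - 1/8 * (act_g g f v - f v)) = f v - 1/8 * (\<Sum>g\<in>Grp. act_g g f v)" for v
  proof -
    have "(\<Sum>g\<in>Grp. - 1/8 * (act_g g f v - f v)) = (\<Sum>g\<in>Grp. 1/8 * (f v - act_g g f v))"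
      by (rule sum.cong) (simp_all add: field_simps)
    also have "\<dots> = 1/8 * (\<Sum>g\<in>Grp. f v - act_g g f v)"
      by (rule sum_distrib_left[symmetric])
    also have "\<dots> = f v - 1/8 * (\<Sum>g\<in>Grp. act_g g f v)"
      by (simp add: sum_subtractf card_Grp algebra_simps)
    finally show ?thesis .
  qed
  then have "psub f (reynolds f) = psum Grp (\<lambda>g. psmul (-1/8) (psub (act_g g f) f))"
    by (simp add: reynolds_def psum_def psub_def psmul_def fun_eq_iff)
  also have "\<dots> \<in> ideal_gen R"
    using assms(2) by (intro ideal_gen_psum finite_Grp ideal_gen.smul)
  finally show ?thesis
    by (simp add: cong_mod_def)
qed

definition action_stable :: "fpoly set \<Rightarrow> bool" where
  "action_stable R \<longleftrightarrow> (\<forall>r\<in>R. act_poly act_r r \<in> ideal_gen R \<and> act_poly act_s r \<in> ideal_gen R)"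

context
  fixes R :: "fpoly set"
  assumes R_FA: "R \<subseteq> FA" and stable: "action_stable R"
begin

lemma act_g_ideal_gen: "F \<in> ideal_gen R \<Longrightarrow> act_g g F \<in> ideal_gen R"
proof -
  have r: "G \<in> ideal_gen R \<Longrightarrow> (act_poly act_r ^^ n) G \<in> ideal_gen R" for n G
    by (induction n) (use stable R_FA act_poly_ideal_gen in \<open>auto simp: action_stable_def\<close>)
  have s: "G \<in> ideal_gen R \<Longrightarrow> (act_poly act_s ^^ n) G \<in> ideal_gen R" for n G
    by (induction n) (use stable R_FA act_poly_ideal_gen in \<open>auto simp: action_stable_def\<close>)
  show "F \<in> ideal_gen R \<Longrightarrow> act_g g F \<in> ideal_gen R"
    by (cases g) (simp add: act_g_def r s)
qed

lemma reynolds_cong_mod: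
  assumes "F \<in> FA" "G \<in> FA" "cong_mod R F G"
  shows "cong_mod R (reynolds F) (reynolds G)"
proof -
  have "reynolds (psub F G) \<in> ideal_gen R"
    using assms unfolding reynolds_def cong_mod_def
    by (intro ideal_gen.smul ideal_gen_psum finite_Grp act_g_ideal_gen)
  then show ?thesis
    using assms by (simp add: cong_mod_def reynolds_psub)
qed

end

lemma rel_in_FA [simp]: "rel c1 a b c2 d e \<in> FA"
  by (simp add: rel_def)

lemma act_poly_rel:
  "act_poly m (rel c1 a b c2 d e) =
   rel (c1 * fst (m a) * fst (m b)) (snd (m a)) (snd (m b))
     (c2 * fst (m d) * fst (m e)) (snd (m d)) (snd (m e))"
  unfolding rel_def
  by (simp add: act_poly_padd act_poly_psmul act_poly_mon)
     (simp add: fun_eq_iff psmul_def padd_def mult_ac)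

lemma rel_swap: "rel c1 a b c2 d e = rel c2 d e c1 a b"
  by (simp add: rel_def padd_def fun_eq_iff)

lemma rel_in_ideal_gen_scaled:
  assumes "rel c1' a b c2' d e \<in> R" "c1' \<noteq> 0" "c1 * c2' = c2 * c1'"
  shows "rel c1 a b c2 d e \<in> ideal_gen R"
proof -
  have "rel c1 a b c2 d e = psmul (c1 / c1') (rel c1' a b c2' d e)"
    using assms(2,3) by (simp add: rel_def psmul_def padd_def fun_eq_iff field_simps)
  then show ?thesis using assms(1) by (simp add: generator_in_ideal_gen ideal_gen.smul)
qed

text \<open>Each relation is mapped by \<open>r\<close> and by \<open>s\<close> to a multiple of a relation, possibly with its two
  monomials swapped; the relation is located by unification against the list \<open>Brels\<close>.\<close>
lemma action_stable_Brels: "action_stable (Brels 1 1 (-1) u1 u2 u3 u4)"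
proof -
  define R where "R = Brels 1 1 (-1) u1 u2 u3 u4"
  have "\<forall>r\<in>Brels 1 1 (-1) u1 u2 u3 u4. act_poly act_r r \<in> ideal_gen R \<and> act_poly act_s r \<in> ideal_gen R"
    unfolding Brels_def ball_simps act_poly_rel
    by (intro conjI; simp (no_asm);
        ((rule rel_in_ideal_gen_scaled, (unfold R_def Brels_def)[1], (rule insertI1 insertI2)+,
          simp, simp add: algebra_simps)
        | (subst rel_swap, rule rel_in_ideal_gen_scaled, (unfold R_def Brels_def)[1],
          (rule insertI1 insertI2)+, simp, simp add: algebra_simps)))
  then show ?thesis unfolding action_stable_def R_def .
qed

lemma gmul_in_Grp [simp]: "x \<in> Grp \<Longrightarrow> y \<in> Grp \<Longrightarrow> gmul x y \<in> Grp"
  by (auto simp: Grp_def gmul_def split: prod.splits)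

lemma gmul_assoc: "x \<in> Grp \<Longrightarrow> y \<in> Grp \<Longrightarrow> z \<in> Grp \<Longrightarrow> gmul (gmul x y) z = gmul x (gmul y z)"
  unfolding Grp_eq by (auto simp: gmul_def)

lemma ge_in_Grp [simp]: "ge \<in> Grp"
  by (simp add: ge_def Grp_def)

lemma gmul_ge_left [simp]: "x \<in> Grp \<Longrightarrow> gmul ge x = x"
  by (auto simp: Grp_def ge_def gmul_def)

lemma gmul_ge_right [simp]: "x \<in> Grp \<Longrightarrow> gmul x ge = x"
  by (auto simp: Grp_def ge_def gmul_def)

lemma grade_in_Grp [simp]: "grade t \<in> Grp"
  by (cases t) (simp_all add: gs_def gr_def gmul_def Grp_def)

lemma grade_simps:
  "grade X1 = (0, 1)" "grade X2 = (2, 1)" "grade Y1 = (3, 1)" "grade Y2 = (1, 1)"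
  "grade Z1 = (3, 1)" "grade Z2 = (1, 1)"
  by (simp_all add: gmul_def gs_def gr_def)

lemma wgrade_Nil [simp]: "wgrade [] = ge"
  by (simp add: wgrade_def)

lemma wgrade_Cons [simp]: "wgrade (t # w) = gmul (grade t) (wgrade w)"
  by (simp add: wgrade_def)

lemma wgrade_in_Grp [simp]: "wgrade w \<in> Grp"
  by (induction w) simp_all

lemma wgrade_append: "wgrade (u @ v) = gmul (wgrade u) (wgrade v)"
  by (induction u) (simp_all add: gmul_assoc)

definition ginv :: "grp \<Rightarrow> grp" where
  "ginv x = (case x of (a, b) \<Rightarrow> if b = 0 then ((4 - a) mod 4, 0) else ((a + 2) mod 4, 1))"

definition gconj :: "grp \<Rightarrow> grp \<Rightarrow> grp" where
  "gconj h x = gmul (ginv h) (gmul x h)"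

lemma ginv_in_Grp [simp]: "ginv h \<in> Grp"
  by (auto simp: ginv_def Grp_def split: prod.splits)

lemma gmul_ginv: "h \<in> Grp \<Longrightarrow> gmul h (ginv h) = ge"
  unfolding Grp_eq by (auto simp: gmul_def ginv_def ge_def)

lemma ginv_gmul: "h \<in> Grp \<Longrightarrow> gmul (ginv h) h = ge"
  unfolding Grp_eq by (auto simp: gmul_def ginv_def ge_def)

lemma gconj_gmul:
  assumes "h \<in> Grp" "x \<in> Grp" "y \<in> Grp"
  shows "gconj h (gmul x y) = gmul (gconj h x) (gconj h y)"
proof -
  have "gmul x y = gmul x (gmul (gmul h (ginv h)) y)"
    using assms by (simp add: gmul_ginv)
  then show ?thesis
    using assms by (simp add: gconj_def gmul_assoc)
qed

lemma gconj_ge [simp]: "h \<in> Grp \<Longrightarrow> gconj h ge = ge"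
  by (simp add: gconj_def ginv_gmul)

text \<open>This is the axiom \<open>A\<^sub>x \<cdot> g \<subseteq> A\<^bsub>g\<^sup>-\<^sup>1 x g\<^esub>\<close> of a \<open>D(G)\<close>-module algebra.\<close>
lemma grade_act_r: "grade (snd (act_r t)) = gconj gr (grade t)"
  by (cases t) (simp_all add: gconj_def ginv_def gmul_def gr_def gs_def)

lemma grade_act_s: "grade (snd (act_s t)) = gconj gs (grade t)"
  by (cases t) (simp_all add: gconj_def ginv_def gmul_def gr_def gs_def)

lemma wgrade_map_conj:
  assumes "h \<in> Grp" "\<And>t. grade (snd (m t)) = gconj h (grade t)"
  shows "wgrade (map (snd \<circ> m) w) = gconj h (wgrade w)"
  by (induction w) (simp_all add: assms gconj_gmul)

lemma wgrade_subst_of: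
  assumes "wgrade w = ge"
  shows "wgrade (map (snd \<circ> subst_of g) w) = ge"
proof -
  define keeps where
    "keeps m \<longleftrightarrow> (\<forall>w. wgrade w = ge \<longrightarrow> wgrade (map (snd \<circ> m) w) = ge)" for m :: subst
  have comp: "keeps (subst_comp m m')"
    if "keeps m" "h \<in> Grp" "\<And>t. grade (snd (m' t)) = gconj h (grade t)" for m m' :: subst and h
  proof -
    have "map (snd \<circ> subst_comp m m') w = map (snd \<circ> m') (map (snd \<circ> m) w)" for w
      by (simp add: subst_comp_def)
    then show ?thesis
      using that unfolding keeps_def by (simp only: wgrade_map_conj) simp
  qed
  have comp_r: "keeps m \<Longrightarrow> keeps (subst_comp m act_r)" for m
    using comp[of m gr act_r] grade_act_r by (simp add: gr_def Grp_def)
  have comp_s: "keeps m \<Longrightarrow> keeps (subst_comp m act_s)" for m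
    using comp[of m gs act_s] grade_act_s by (simp add: gs_def Grp_def)
  have "keeps subst_id" by (simp add: keeps_def subst_id_def comp_def)
  then have "keeps (subst_rpow a)" for a
    unfolding subst_rpow_def by (induction a) (simp_all add: comp_r)
  then have "keeps (((\<lambda>m. subst_comp m act_s) ^^ b) (subst_rpow a))" for a b
    by (induction b) (simp_all add: comp_s)
  then show ?thesis
    using assms by (cases g) (simp add: keeps_def subst_of_def)
qed

lemma proj_e_in_FA [simp]: "f \<in> FA \<Longrightarrow> proj_e f \<in> FA"
  unfolding FA_iff proj_e_def by (rule finite_subset[of _ "{w. f w \<noteq> 0}"]) auto

lemma reynolds_mon_support:
  assumes "reynolds (mon w) v \<noteq> 0"
  obtains g where "v = map (snd \<circ> subst_of g) w"
proof -
  from assms obtain g where "act_g g (mon w) v \<noteq> 0"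
    unfolding reynolds_def psmul_def psum_def by (auto elim: sum.not_neutral_contains_not_neutral)
  then have "act_poly (subst_of g) (mon w) v \<noteq> 0"
    by (simp add: act_g_eq_act_poly)
  then have "v = map (snd \<circ> subst_of g) w"
    unfolding act_poly_mon by (simp add: psmul_def mon_def split: if_splits)
  then show ?thesis by (rule that)
qed

lemma homog_reynolds_mon: "homog (length w) (reynolds (mon w))"
  unfolding homog_def by (metis reynolds_mon_support length_map)

lemma proj_e_reynolds_mon: "wgrade w = ge \<Longrightarrow> proj_e (reynolds (mon w)) = reynolds (mon w)"
  unfolding proj_e_def fun_eq_iff by (metis reynolds_mon_support wgrade_subst_of)

lemma even_fst_wgrade: "even (fst (wgrade w)) \<longleftrightarrow> even (length (filter (\<lambda>t. t \<notin> {X1, X2}) w))"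
proof (induction w)
  case (Cons t w)
  have parity: "even (fst (gmul x y)) \<longleftrightarrow> (even (fst x) \<longleftrightarrow> even (fst y))" if "x \<in> Grp" "y \<in> Grp" for x y
    using that unfolding Grp_eq by (auto simp: gmul_def)
  have "even (fst (grade t)) \<longleftrightarrow> t \<in> {X1, X2}"
    by (cases t) (simp_all add: gmul_def gs_def gr_def)
  with Cons show ?case by (simp add: parity)
qed (simp add: ge_def)

text \<open>Length and grade are part of the definition, which spares showing that the ideal is
  homogeneous.\<close>
definition word_assoc :: "fpoly set \<Rightarrow> word \<Rightarrow> word \<Rightarrow> bool" where
  "word_assoc R w w' \<longleftrightarrow> length w = length w' \<and> wgrade w = wgrade w' \<and>
     (\<exists>k. k \<noteq> 0 \<and> cong_mod R (mon w) (psmul k (mon w')))"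

lemma word_assoc_refl [simp]: "word_assoc R w w"
  unfolding word_assoc_def by (auto intro: exI[of _ 1])

lemma word_assoc_sym: "word_assoc R w w' \<Longrightarrow> word_assoc R w' w"
proof -
  assume assoc: "word_assoc R w w'"
  then obtain k where "k \<noteq> 0" "cong_mod R (mon w) (psmul k (mon w'))"
    by (auto simp: word_assoc_def)
  then have "cong_mod R (psmul (1/k) (mon w)) (psmul (1/k) (psmul k (mon w')))"
    by (intro cong_mod_psmul)
  then have "cong_mod R (psmul (1/k) (mon w)) (mon w')"
    using \<open>k \<noteq> 0\<close> by simp
  then have "cong_mod R (mon w') (psmul (1/k) (mon w))"
    by (rule cong_mod_sym)
  with \<open>k \<noteq> 0\<close> assoc show ?thesis
    by (auto simp: word_assoc_def intro!: exI[of _ "1/k"])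
qed

lemma word_assoc_trans: "word_assoc R w1 w2 \<Longrightarrow> word_assoc R w2 w3 \<Longrightarrow> word_assoc R w1 w3"
proof -
  assume a12: "word_assoc R w1 w2" and a23: "word_assoc R w2 w3"
  then obtain k l where "k \<noteq> 0" "l \<noteq> 0" and k: "cong_mod R (mon w1) (psmul k (mon w2))"
    and l: "cong_mod R (mon w2) (psmul l (mon w3))"
    by (auto simp: word_assoc_def)
  from l have "cong_mod R (psmul k (mon w2)) (psmul (k * l) (mon w3))"
    using cong_mod_psmul[OF l, of k] by simp
  with k have "cong_mod R (mon w1) (psmul (k * l) (mon w3))"
    by (rule cong_mod_trans)
  with \<open>k \<noteq> 0\<close> \<open>l \<noteq> 0\<close> a12 a23 show ?thesis
    by (auto simp: word_assoc_def intro!: exI[of _ "k * l"])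
qed

lemma cong_mod_rel:
  assumes "rel c1 a b c2 d e \<in> R" "c1 \<noteq> 0"
  shows "cong_mod R (mon [a, b]) (psmul (- c2 / c1) (mon [d, e]))"
proof -
  have "psub (mon [a, b]) (psmul (- c2 / c1) (mon [d, e])) = psmul (1 / c1) (rel c1 a b c2 d e)"
    using assms(2) by (simp add: rel_def psub_def psmul_def padd_def fun_eq_iff field_simps)
  then show ?thesis
    using assms(1) by (simp add: cong_mod_def generator_in_ideal_gen ideal_gen.smul)
qed

lemma word_assoc_rel:
  assumes "rel c1 a b c2 d e \<in> R" "c1 \<noteq> 0" "c2 \<noteq> 0" "wgrade [a, b] = wgrade [d, e]"
  shows "word_assoc R [a, b] [d, e]"
  using cong_mod_rel[OF assms(1,2)] assms(2-4)
  by (auto simp: word_assoc_def intro!: exI[of _ "- c2 / c1"])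

context
  fixes R :: "fpoly set"
  assumes R_FA: "R \<subseteq> FA"
begin

lemma cong_mod_mon_context:
  assumes "cong_mod R (mon w) (psmul k (mon w'))"
  shows "cong_mod R (mon (p @ w @ q)) (psmul k (mon (p @ w' @ q)))"
proof -
  have "cong_mod R (pmul (mon p) (pmul (mon w) (mon q))) (pmul (mon p) (pmul (psmul k (mon w')) (mon q)))"
    using assms R_FA by (intro cong_mod_pmul) (auto intro: cong_mod_pmul)
  then show ?thesis
    by (simp add: pmul_mon_mon pmul_psmul_left pmul_psmul_right)
qed

lemma word_assoc_context: "word_assoc R w w' \<Longrightarrow> word_assoc R (p @ w @ q) (p @ w' @ q)"
  unfolding word_assoc_def by (auto simp: wgrade_append intro: cong_mod_mon_context)

lemma word_assoc_append:
  "word_assoc R a a' \<Longrightarrow> word_assoc R b b' \<Longrightarrow> word_assoc R (a @ b) (a' @ b')"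
  using word_assoc_context[of a a' "[]" b] word_assoc_context[of b b' a' "[]"]
  by (auto intro: word_assoc_trans)

lemma word_assoc_pass:
  "(\<And>l. l \<in> set B \<Longrightarrow> word_assoc R [t, l] [f l, t]) \<Longrightarrow> word_assoc R (t # B) (map f B @ [t])"
proof (induction B)
  case (Cons l B)
  have "word_assoc R ([] @ [t, l] @ B) ([] @ [f l, t] @ B)"
    using Cons.prems by (intro word_assoc_context) simp
  moreover have "word_assoc R ([f l] @ (t # B) @ []) ([f l] @ (map f B @ [t]) @ [])"
    using Cons by (intro word_assoc_context) simp
  ultimately show ?case
    by (auto intro: word_assoc_trans)
qed simp

lemma word_assoc_perm:
  assumes comm: "\<And>a b. a \<in> S \<Longrightarrow> b \<in> S \<Longrightarrow> word_assoc R [a, b] [b, a]"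
  shows "set u \<subseteq> S \<Longrightarrow> mset u = mset u' \<Longrightarrow> word_assoc R u u'"
proof (induction u arbitrary: u')
  case Nil
  then show ?case by simp
next
  case (Cons a r)
  then have "a \<in> set u'" by (metis list.set_intros(1) set_mset_mset)
  then obtain p q where u': "u' = p @ a # q" by (meson split_list)
  have "set u' \<subseteq> S" using Cons.prems by (metis set_mset_mset)
  have "word_assoc R ([a] @ r @ []) ([a] @ (p @ q) @ [])"
    using Cons u' by (intro word_assoc_context) auto
  moreover have "word_assoc R ([] @ (a # p) @ q) ([] @ (map id p @ [a]) @ q)"
    using comm Cons.prems \<open>set u' \<subseteq> S\<close> u' by (intro word_assoc_context word_assoc_pass) auto
  ultimately show ?case
    using u' by (auto intro: word_assoc_trans)
qed

end

section \<open>Normal words in \<open>B\<close>\<close>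

fun flipx :: "gen \<Rightarrow> gen" where
  "flipx X1 = X2"
| "flipx X2 = X1"
| "flipx t = t"

lemma flipx_flipx [simp]: "flipx (flipx t) = t"
  by (cases t) simp_all

lemma funpow_flipx: "flipx ^^ n = (if even n then id else flipx)"
  by (induction n) (auto simp: fun_eq_iff)

type_synonym counts = "gen \<Rightarrow> nat"

definition xword :: "counts \<Rightarrow> word" where
  "xword v = replicate (v X1) X1 @ replicate (v X2) X2"

definition yzword :: "counts \<Rightarrow> word" where
  "yzword v = replicate (v Y1) Y1 @ replicate (v Y2) Y2 @ replicate (v Z1) Z1 @ replicate (v Z2) Z2"

definition std_word :: "counts \<Rightarrow> word" where
  "std_word v = xword v @ yzword v"

definition yzdeg :: "counts \<Rightarrow> nat" where
  "yzdeg v = v Y1 + v Y2 + v Z1 + v Z2"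

definition deg :: "counts \<Rightarrow> nat" where
  "deg v = v X1 + v X2 + yzdeg v"

lemma length_std_word: "length (std_word v) = deg v"
  by (simp add: std_word_def xword_def yzword_def deg_def yzdeg_def)

lemma set_xword: "set (xword v) \<subseteq> {X1, X2}"
  by (auto simp: xword_def)

lemma set_yzword: "set (yzword v) \<inter> {X1, X2} = {}"
  by (auto simp: yzword_def)

lemma count_xword: "count (mset (xword v)) t = (if t \<in> {X1, X2} then v t else 0)"
  by (cases t) (simp_all add: xword_def)

lemma count_yzword: "count (mset (yzword v)) t = (if t \<in> {X1, X2} then 0 else v t)"
  by (cases t) (simp_all add: yzword_def)

lemma deg_diff:
  assumes "m \<le> v"
  shows "yzdeg v = yzdeg (v - m) + yzdeg m" "deg v = deg (v - m) + deg m"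
proof -
  have le: "m t \<le> v t" for t
    using assms by (simp add: le_fun_def)
  show "yzdeg v = yzdeg (v - m) + yzdeg m"
    using le[of Y1] le[of Y2] le[of Z1] le[of Z2] by (simp add: yzdeg_def)
  then show "deg v = deg (v - m) + deg m"
    using le[of X1] le[of X2] by (simp add: deg_def)
qed

lemma even_yzdeg:
  assumes "wgrade (std_word v) = ge"
  shows "even (yzdeg v)"
proof -
  have "filter (\<lambda>t. t \<notin> {X1, X2}) (std_word v) = yzword v"
    by (simp add: std_word_def xword_def yzword_def)
  moreover have "length (yzword v) = yzdeg v"
    by (simp add: yzword_def yzdeg_def)
  moreover have "even (fst (wgrade (std_word v)))"
    using assms by (simp add: ge_def)
  ultimately show ?thesis
    by (simp only: even_fst_wgrade)
qed

locale B_algebra =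
  fixes u1 u2 u3 u4 :: complex
  assumes nonzero: "u1 \<noteq> 0" "u2 \<noteq> 0" "u3 \<noteq> 0" "u4 \<noteq> 0"
begin

abbreviation rels :: "fpoly set" where
  "rels \<equiv> Brels 1 1 (-1) u1 u2 u3 u4"

lemma rels_FA: "rels \<subseteq> FA"
  by (auto simp: Brels_def)

lemma letter_swaps:
  "word_assoc rels [X2, X1] [X1, X2]"
  "word_assoc rels [Y1, X1] [X2, Y1]" "word_assoc rels [Y1, X2] [X1, Y1]"
  "word_assoc rels [Y2, X1] [X2, Y2]" "word_assoc rels [Y2, X2] [X1, Y2]"
  "word_assoc rels [Z1, X1] [X2, Z1]" "word_assoc rels [Z1, X2] [X1, Z1]"
  "word_assoc rels [Z2, X1] [X2, Z2]" "word_assoc rels [Z2, X2] [X1, Z2]"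
  "word_assoc rels [Y2, Y1] [Y1, Y2]" "word_assoc rels [Z2, Z1] [Z1, Z2]"
  "word_assoc rels [Z1, Y1] [Y1, Z1]" "word_assoc rels [Z1, Y2] [Y2, Z1]"
  "word_assoc rels [Z2, Y1] [Y1, Z2]" "word_assoc rels [Z2, Y2] [Y2, Z2]"
  by (rule word_assoc_sym, rule word_assoc_rel,
      auto simp: Brels_def nonzero gmul_def gs_def gr_def ge_def)+

lemma X_commute: "a \<in> {X1, X2} \<Longrightarrow> b \<in> {X1, X2} \<Longrightarrow> word_assoc rels [a, b] [b, a]"
  using letter_swaps(1) word_assoc_sym by auto

lemma YZ_pass: "t \<notin> {X1, X2} \<Longrightarrow> word_assoc rels [t, a] [flipx a, t]"
  by (cases t; cases a) (use letter_swaps word_assoc_sym in auto)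

lemma YZ_word_pass:
  "set ys \<inter> {X1, X2} = {} \<Longrightarrow> word_assoc rels (ys @ xs) (map (flipx ^^ length ys) xs @ ys)"
proof (induction ys)
  case (Cons t ys)
  have "word_assoc rels ([t] @ (ys @ xs) @ []) ([t] @ (map (flipx ^^ length ys) xs @ ys) @ [])"
    using Cons by (intro word_assoc_context[OF rels_FA]) auto
  moreover have "word_assoc rels (t # map (flipx ^^ length ys) xs)
      (map flipx (map (flipx ^^ length ys) xs) @ [t])"
    using Cons.prems YZ_pass by (intro word_assoc_pass[OF rels_FA]) auto
  then have "word_assoc rels ([] @ (t # map (flipx ^^ length ys) xs) @ ys)
      ([] @ (map flipx (map (flipx ^^ length ys) xs) @ [t]) @ ys)"
    by (rule word_assoc_context[OF rels_FA])
  ultimately show ?case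
    by (auto intro: word_assoc_trans simp: comp_def funpow_Suc_right[symmetric])
qed simp

lemma X_word_perm: "set u \<subseteq> {X1, X2} \<Longrightarrow> mset u = mset u' \<Longrightarrow> word_assoc rels u u'"
  by (rule word_assoc_perm[OF rels_FA X_commute])

lemma YZ_word_perm: "set u \<inter> {X1, X2} = {} \<Longrightarrow> mset u = mset u' \<Longrightarrow> word_assoc rels u u'"
proof (rule word_assoc_perm[OF rels_FA, of "- {X1, X2}"])
  fix a b assume "a \<in> - {X1, X2}" "b \<in> - {X1, X2}"
  then show "word_assoc rels [a, b] [b, a]"
    using YZ_pass[of a b] by (cases b) auto
qed auto

lemma mset_xword:
  assumes "set xs \<subseteq> {X1, X2}" "\<And>t. t \<in> {X1, X2} \<Longrightarrow> v t = count (mset xs) t"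
  shows "mset xs = mset (xword v)"
proof (rule multiset_eqI)
  fix t
  show "count (mset xs) t = count (mset (xword v)) t"
    using assms by (cases "t \<in> {X1, X2}") (auto simp: count_xword count_eq_zero_iff)
qed

lemma mset_yzword:
  assumes "set ys \<inter> {X1, X2} = {}" "\<And>t. t \<notin> {X1, X2} \<Longrightarrow> v t = count (mset ys) t"
  shows "mset ys = mset (yzword v)"
proof (rule multiset_eqI)
  fix t
  show "count (mset ys) t = count (mset (yzword v)) t"
    using assms by (cases "t \<in> {X1, X2}") (auto simp: count_yzword count_eq_zero_iff)
qed

text \<open>Move every \<open>y\<^sub>i\<close> and \<open>z\<^sub>i\<close> to the right; each \<open>x\<^sub>j\<close> it passes becomes \<open>x\<^sub>3\<^sub>-\<^sub>j\<close>.\<close>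
lemma word_assoc_separated:
  "\<exists>xs ys. set xs \<subseteq> {X1, X2} \<and> set ys \<inter> {X1, X2} = {} \<and> word_assoc rels w (xs @ ys)"
proof (induction w)
  case Nil
  show ?case by (rule exI[of _ "[]"], rule exI[of _ "[]"]) simp
next
  case (Cons t w)
  then obtain xs ys where xs: "set xs \<subseteq> {X1, X2}" and ys: "set ys \<inter> {X1, X2} = {}"
    and w: "word_assoc rels w (xs @ ys)" by blast
  have tw: "word_assoc rels (t # w) (t # xs @ ys)"
    using word_assoc_context[OF rels_FA w, of "[t]" "[]"] by simp
  show ?case
  proof (cases "t \<in> {X1, X2}")
    case True
    then show ?thesis using xs ys tw by (intro exI[of _ "t # xs"] exI[of _ ys]) auto
  next
    case False
    have "word_assoc rels ([t] @ xs) (map flipx xs @ [t])"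
      using YZ_word_pass[of "[t]" xs] False by auto
    then have "word_assoc rels (([t] @ xs) @ ys) ((map flipx xs @ [t]) @ ys)"
      by (rule word_assoc_append[OF rels_FA _ word_assoc_refl])
    then have "word_assoc rels (t # xs @ ys) (map flipx xs @ t # ys)"
      by simp
    moreover have "set (map flipx xs) \<subseteq> {X1, X2}"
      using xs by auto
    ultimately show ?thesis
      using False ys tw
      by (intro exI[of _ "map flipx xs"] exI[of _ "t # ys"]) (auto intro: word_assoc_trans)
  qed
qed

lemma word_assoc_std_word: "\<exists>v. word_assoc rels w (std_word v)"
proof -
  obtain xs ys where xs: "set xs \<subseteq> {X1, X2}" and ys: "set ys \<inter> {X1, X2} = {}"
    and w: "word_assoc rels w (xs @ ys)"
    using word_assoc_separated by blast
  define v where "v t = count (mset (xs @ ys)) t" for t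
  have "v t = count (mset xs) t" if "t \<in> {X1, X2}" for t
    using ys that by (auto simp: v_def count_eq_zero_iff)
  then have "word_assoc rels xs (xword v)"
    using xs by (intro X_word_perm mset_xword) auto
  moreover have "v t = count (mset ys) t" if "t \<notin> {X1, X2}" for t
    using xs that by (auto simp: v_def count_eq_zero_iff)
  then have "word_assoc rels ys (yzword v)"
    using ys by (intro YZ_word_perm mset_yzword) auto
  ultimately have "word_assoc rels (xs @ ys) (std_word v)"
    unfolding std_word_def by (rule word_assoc_append[OF rels_FA])
  with w show ?thesis
    by (blast intro: word_assoc_trans)
qed

text \<open>An even number of letters \<open>y\<^sub>i, z\<^sub>i\<close> commutes with any word, so normal words multiply like
  their exponent vectors add.\<close>
lemma std_word_append:
  assumes "m \<le> v" "even (yzdeg (v - m))"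
  shows "word_assoc rels (std_word (v - m) @ std_word m) (std_word v)"
proof -
  have "length (yzword (v - m)) = yzdeg (v - m)"
    by (simp add: yzword_def yzdeg_def)
  then have "word_assoc rels (yzword (v - m) @ xword m) (xword m @ yzword (v - m))"
    using YZ_word_pass[OF set_yzword, of "v - m" "xword m"] assms(2) by (simp add: funpow_flipx)
  then have "word_assoc rels (xword (v - m) @ (yzword (v - m) @ xword m) @ yzword m)
      (xword (v - m) @ (xword m @ yzword (v - m)) @ yzword m)"
    by (rule word_assoc_context[OF rels_FA])
  then have "word_assoc rels (std_word (v - m) @ std_word m)
      ((xword (v - m) @ xword m) @ (yzword (v - m) @ yzword m))"
    by (simp add: std_word_def)
  moreover have "word_assoc rels (xword (v - m) @ xword m) (xword v)"
    using assms(1) set_xword[of "v - m"] set_xword[of m]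
    by (intro X_word_perm mset_xword) (auto simp: count_xword le_fun_def)
  moreover have "word_assoc rels (yzword (v - m) @ yzword m) (yzword v)"
    using assms(1) set_yzword[of "v - m"] set_yzword[of m]
    by (intro YZ_word_perm mset_yzword) (auto simp: count_yzword le_fun_def)
  ultimately show ?thesis
    unfolding std_word_def[of v] by (blast intro: word_assoc_trans word_assoc_append[OF rels_FA])
qed

end

text \<open>Unfolding \<open>act_g\<close> directly, rather than via \<open>subst_of\<close>, keeps these computations small.\<close>
lemma reynolds_mon_eq:
  "reynolds (mon w) = psmul (1/8) (\<lambda>v. \<Sum>(a, b)\<in>Grp. (act_poly act_s ^^ b) ((act_poly act_r ^^ a) (mon w)) v)"
  by (simp add: reynolds_def psum_def act_g_def case_prod_unfold)

lemmas reynolds_mon_simps = Grp_eq numeral_3_eq_3 numeral_2_eq_2 act_poly_mon act_poly_psmul_mon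

fun partner :: "gen \<Rightarrow> gen" where
  "partner X1 = X2" | "partner X2 = X1" | "partner Y1 = Y2" | "partner Y2 = Y1"
| "partner Z1 = Z2" | "partner Z2 = Z1"

lemma reynolds_power4:
  "reynolds (mon [t, t, t, t]) =
    psmul (1/2) (padd (mon [t, t, t, t]) (mon [partner t, partner t, partner t, partner t]))"
  unfolding reynolds_mon_eq
  by (cases t) (simp_all add: reynolds_mon_simps, simp_all add: psmul_def padd_def mon_def fun_eq_iff)

lemma reynolds_X1X1X2X2:
  "reynolds (mon [X1, X1, X2, X2]) = psmul (1/2) (padd (mon [X1, X1, X2, X2]) (mon [X2, X2, X1, X1]))"
  unfolding reynolds_mon_eq
  by (simp add: reynolds_mon_simps) (simp add: psmul_def padd_def mon_def fun_eq_iff)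

lemma reynolds_Y1Y2: "reynolds (mon [Y1, Y2]) = psmul (1/2) (padd (mon [Y1, Y2]) (mon [Y2, Y1]))"
  unfolding reynolds_mon_eq
  by (simp add: reynolds_mon_simps) (simp add: psmul_def padd_def mon_def fun_eq_iff)

lemma reynolds_Z1Z2:
  "reynolds (mon [Z1, Z2]) = psmul (1/2) (padd (mon [Z1, Z2]) (psmul (-1) (mon [Z2, Z1])))"
  unfolding reynolds_mon_eq
  by (simp add: reynolds_mon_simps) (simp add: psmul_def padd_def mon_def fun_eq_iff)

lemma reynolds_pmul_power4:
  "reynolds (pmul (mon x) (reynolds (mon [t, t, t, t]))) =
    psmul (1/2) (padd (reynolds (mon (x @ [t, t, t, t])))
      (reynolds (mon (x @ [partner t, partner t, partner t, partner t]))))"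
  by (simp add: reynolds_power4 pmul_padd_right pmul_psmul_right pmul_mon_mon reynolds_padd
      reynolds_psmul)

section \<open>Generation of the invariants in low degree\<close>

text \<open>The balanced factors \<open>x\<^sub>1\<^sup>2x\<^sub>2\<^sup>2\<close>, \<open>y\<^sub>1y\<^sub>2\<close>, \<open>z\<^sub>1z\<^sub>2\<close>: their monomials are invariant modulo the
  relations.\<close>
definition mX :: counts where "mX = (\<lambda>_. 0)(X1 := 2, X2 := 2)"
definition mY :: counts where "mY = (\<lambda>_. 0)(Y1 := 1, Y2 := 1)"
definition mZ :: counts where "mZ = (\<lambda>_. 0)(Z1 := 1, Z2 := 1)"
definition power4 :: "gen \<Rightarrow> counts" where "power4 t = (\<lambda>_. 0)(t := 4)"

lemma std_word_mX: "std_word mX = [X1, X1, X2, X2]"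
  by (simp add: std_word_def xword_def yzword_def mX_def numeral_2_eq_2)

lemma std_word_mY: "std_word mY = [Y1, Y2]"
  by (simp add: std_word_def xword_def yzword_def mY_def)

lemma std_word_mZ: "std_word mZ = [Z1, Z2]"
  by (simp add: std_word_def xword_def yzword_def mZ_def)

lemma std_word_power4: "std_word (power4 t) = [t, t, t, t]"
  by (cases t) (simp_all add: std_word_def xword_def yzword_def power4_def numeral_eq_Suc)

lemma le_balanced_iff:
  "mX \<le> v \<longleftrightarrow> 2 \<le> v X1 \<and> 2 \<le> v X2"
  "mY \<le> v \<longleftrightarrow> 1 \<le> v Y1 \<and> 1 \<le> v Y2"
  "mZ \<le> v \<longleftrightarrow> 1 \<le> v Z1 \<and> 1 \<le> v Z2"
  by (auto simp: le_fun_def all_gen mX_def mY_def mZ_def)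

text \<open>Without a balanced factor, one of \<open>x\<^sub>1, x\<^sub>2\<close> occurs at most once and one letter of each pair
  \<open>y\<^sub>1, y\<^sub>2\<close> and \<open>z\<^sub>1, z\<^sub>2\<close> does not occur; if moreover no \<open>x\<^sub>j\<close> occurs six times and no \<open>y\<^sub>j\<close> or \<open>z\<^sub>j\<close>
  five times, the degree is at most \<open>6 + 4 + 4\<close>.\<close>
lemma degree_cases:
  "deg v \<le> 14 \<or> mX \<le> v \<or> mY \<le> v \<or> mZ \<le> v \<or> (\<exists>t. (if t \<in> {X1, X2} then 6 else 5) \<le> v t)"
  unfolding le_balanced_iff ex_gen deg_def yzdeg_def by simp arith

lemma balanced_facts:
  assumes "m \<in> {mX, mY, mZ}"
  shows "wgrade (std_word m) = ge" "even (yzdeg m)" "0 < deg m" "deg m \<le> 14"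
proof -
  show "wgrade (std_word m) = ge"
    using assms by (auto simp: std_word_mX std_word_mY std_word_mZ grade_simps gmul_def ge_def
        simp del: grade.simps)
  show "even (yzdeg m)" "0 < deg m" "deg m \<le> 14"
    using assms by (auto simp: mX_def mY_def mZ_def deg_def yzdeg_def)
qed

lemma power4_facts:
  "wgrade (std_word (power4 t)) = ge" "even (yzdeg (power4 t))" "deg (power4 t) = 4"
proof -
  show "wgrade (std_word (power4 t)) = ge"
    by (cases t) (simp_all add: std_word_power4 grade_simps gmul_def ge_def del: grade.simps)
  show "even (yzdeg (power4 t))" "deg (power4 t) = 4"
    by (cases t; simp add: power4_def deg_def yzdeg_def)+
qed

definition swap_power4 :: "gen \<Rightarrow> counts \<Rightarrow> counts" where
  "swap_power4 t v = (\<lambda>s. (v - power4 t) s + power4 (partner t) s)"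

lemma swap_power4_facts:
  assumes "(if t \<in> {X1, X2} then 6 else 5) \<le> v t"
  shows "power4 t \<le> v" and "power4 (partner t) \<le> swap_power4 t v"
    and "swap_power4 t v - power4 (partner t) = v - power4 t"
    and "deg (swap_power4 t v) = deg v"
    and "mX \<le> swap_power4 t v \<or> mY \<le> swap_power4 t v \<or> mZ \<le> swap_power4 t v"
proof -
  show p: "power4 t \<le> v"
    using assms by (auto simp: le_fun_def power4_def split: if_splits)
  show q: "power4 (partner t) \<le> swap_power4 t v"
    and diff: "swap_power4 t v - power4 (partner t) = v - power4 t"
    by (auto simp: swap_power4_def le_fun_def fun_eq_iff)
  show "deg (swap_power4 t v) = deg v"
    using deg_diff(2)[OF p] deg_diff(2)[OF q] diff power4_facts(3) by simp
  show "mX \<le> swap_power4 t v \<or> mY \<le> swap_power4 t v \<or> mZ \<le> swap_power4 t v"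
    using assms unfolding le_balanced_iff
    by (cases t) (simp_all add: swap_power4_def power4_def, arith+)
qed

context B_algebra
begin

definition low_invariants :: "fpoly set" where
  "low_invariants = {h. h \<in> FA \<and> Binv rels h \<and> (\<exists>d\<le>14. homog d h)}"

definition low_generated :: "fpoly \<Rightarrow> bool" where
  "low_generated F \<longleftrightarrow> (\<exists>h\<in>subalg low_invariants. cong_mod rels F h)"

lemma subalg_low_invariants_FA: "h \<in> subalg low_invariants \<Longrightarrow> h \<in> FA"
  by (induction rule: subalg.induct) (auto simp: low_invariants_def)

lemma low_generated_cong: "cong_mod rels F G \<Longrightarrow> low_generated G \<Longrightarrow> low_generated F"
  unfolding low_generated_def by (blast intro: cong_mod_trans)

lemma low_generated_padd: "low_generated F \<Longrightarrow> low_generated G \<Longrightarrow> low_generated (padd F G)"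
  unfolding low_generated_def by (blast intro: cong_mod_padd subalg.add)

lemma low_generated_psmul: "low_generated F \<Longrightarrow> low_generated (psmul c F)"
  unfolding low_generated_def by (blast intro: cong_mod_psmul subalg.smul)

lemma low_generated_pmul:
  "F \<in> FA \<Longrightarrow> G \<in> FA \<Longrightarrow> low_generated F \<Longrightarrow> low_generated G \<Longrightarrow> low_generated (pmul F G)"
  unfolding low_generated_def
  by (metis cong_mod_pmul[OF rels_FA] subalg.mul subalg_low_invariants_FA)

lemma low_generated_zero: "low_generated (\<lambda>_. 0)"
proof -
  have "psmul 0 (mon []) \<in> subalg low_invariants"
    by (intro subalg.smul subalg.one)
  moreover have "psmul 0 (mon []) = (\<lambda>_. 0)"
    by (simp add: psmul_def)
  ultimately show ?thesis
    unfolding low_generated_def by (metis cong_mod_refl)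
qed

lemma low_generated_reynolds_mon_low:
  assumes "wgrade w = ge" "length w \<le> 14"
  shows "low_generated (reynolds (mon w))"
proof -
  have "psub F F = (\<lambda>_. 0)" for F by (simp add: psub_def)
  then have "Binv rels (reynolds (mon w))"
    using assms(1) by (simp add: Binv_def proj_e_reynolds_mon act_g_reynolds ideal_gen.zero)
  then have "reynolds (mon w) \<in> low_invariants"
    using assms(2) homog_reynolds_mon by (auto simp: low_invariants_def)
  then show ?thesis
    unfolding low_generated_def by (blast intro: subalg.base cong_mod_refl)
qed

lemma low_generated_reynolds_assoc:
  assumes "word_assoc rels w w'" "low_generated (reynolds (mon w'))"
  shows "low_generated (reynolds (mon w))"
proof -
  obtain k where "cong_mod rels (mon w) (psmul k (mon w'))"
    using assms(1) by (auto simp: word_assoc_def)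
  then have "cong_mod rels (reynolds (mon w)) (reynolds (psmul k (mon w')))"
    by (intro reynolds_cong_mod[OF rels_FA action_stable_Brels]) simp_all
  then have "cong_mod rels (reynolds (mon w)) (psmul k (reynolds (mon w')))"
    by (simp add: reynolds_psmul)
  then show ?thesis
    using assms(2) by (blast intro: low_generated_cong low_generated_psmul)
qed

lemma low_generated_reynolds_pmul:
  assumes "low_generated (reynolds (mon x))" "low_generated (reynolds (mon y))"
  shows "low_generated (reynolds (pmul (mon x) (reynolds (mon y))))"
  using assms by (simp add: reynolds_pmul_reynolds low_generated_pmul)

lemma balanced_invariant:
  assumes "m \<in> {mX, mY, mZ}"
  shows "cong_mod rels (mon (std_word m)) (reynolds (mon (std_word m)))"
proof -
  have swap: "cong_mod rels (mon (p @ [X2, X1] @ q)) (mon (p @ [X1, X2] @ q))" for p q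
  proof -
    have "rel 1 X1 X2 (-1) X2 X1 \<in> rels" by (simp add: Brels_def)
    from cong_mod_sym[OF cong_mod_rel[OF this]] show ?thesis
      using cong_mod_mon_context[OF rels_FA, of "[X2, X1]" 1 "[X1, X2]" p q] by simp
  qed
  have "cong_mod rels (mon [X2, X2, X1, X1]) (mon [X2, X1, X2, X1])"
    and "cong_mod rels (mon [X2, X1, X2, X1]) (mon [X1, X2, X2, X1])"
    and "cong_mod rels (mon [X1, X2, X2, X1]) (mon [X1, X2, X1, X2])"
    and "cong_mod rels (mon [X1, X2, X1, X2]) (mon [X1, X1, X2, X2])"
    using swap[of "[X2]" "[X1]"] swap[of "[]" "[X2, X1]"] swap[of "[X1, X2]" "[]"] swap[of "[X1]" "[X2]"]
    by simp_all
  then have XX: "cong_mod rels (mon [X2, X2, X1, X1]) (mon [X1, X1, X2, X2])"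
    by (meson cong_mod_trans)
  have "rel 1 Y1 Y2 (-1) Y2 Y1 \<in> rels" by (simp add: Brels_def)
  from cong_mod_sym[OF cong_mod_rel[OF this]]
  have YY: "cong_mod rels (mon [Y2, Y1]) (mon [Y1, Y2])" by simp
  have "rel 1 Z1 Z2 (- (-1)) Z2 Z1 \<in> rels" by (simp add: Brels_def)
  from cong_mod_sym[OF cong_mod_rel[OF this]]
  have ZZ: "cong_mod rels (psmul (-1) (mon [Z2, Z1])) (mon [Z1, Z2])" by simp
  from assms show ?thesis
    by (elim insertE emptyE) (simp_all add: std_word_mX std_word_mY std_word_mZ reynolds_X1X1X2X2
        reynolds_Y1Y2 reynolds_Z1Z2 cong_mod_half XX YY ZZ)
qed

lemma std_word_split:
  assumes "m \<le> v" "wgrade (std_word v) = ge" "wgrade (std_word m) = ge" "even (yzdeg m)"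
  shows "word_assoc rels (std_word (v - m) @ std_word m) (std_word v)"
    and "wgrade (std_word (v - m)) = ge" and "even (yzdeg (v - m))"
proof -
  have "yzdeg v = yzdeg (v - m) + yzdeg m"
    using assms(1) by (rule deg_diff)
  then show even: "even (yzdeg (v - m))"
    using even_yzdeg[OF assms(2)] assms(4) by auto
  show assoc: "word_assoc rels (std_word (v - m) @ std_word m) (std_word v)"
    by (rule std_word_append[OF assms(1) even])
  then have "gmul (wgrade (std_word (v - m))) ge = ge"
    using assms(2,3) by (simp add: word_assoc_def wgrade_append)
  then show "wgrade (std_word (v - m)) = ge"
    by simp
qed

abbreviation low_generated_std :: "counts \<Rightarrow> bool" where
  "low_generated_std v \<equiv> low_generated (reynolds (mon (std_word v)))"

lemma low_generated_split_balanced: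
  assumes IH: "\<And>v'. deg v' < deg v \<Longrightarrow> wgrade (std_word v') = ge \<Longrightarrow> low_generated_std v'"
    and v: "wgrade (std_word v) = ge" and m: "m \<in> {mX, mY, mZ}" "m \<le> v"
  shows "low_generated_std v"
proof -
  let ?x = "std_word (v - m)" and ?y = "std_word m"
  note m_facts = balanced_facts[OF m(1)]
  note split = std_word_split[OF m(2) v m_facts(1,2)]
  have "deg (v - m) < deg v"
    using deg_diff(2)[OF m(2)] m_facts(3) by simp
  then have "low_generated (reynolds (mon ?x))"
    using IH split(2) by blast
  moreover have "low_generated (reynolds (mon ?y))"
    using m_facts by (simp add: low_generated_reynolds_mon_low length_std_word)
  ultimately have "low_generated (reynolds (pmul (mon ?x) (reynolds (mon ?y))))"
    by (rule low_generated_reynolds_pmul)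
  moreover have "cong_mod rels (pmul (mon ?x) (mon ?y)) (pmul (mon ?x) (reynolds (mon ?y)))"
    using balanced_invariant[OF m(1)] by (intro cong_mod_pmul[OF rels_FA]) simp_all
  then have "cong_mod rels (reynolds (mon (?x @ ?y))) (reynolds (pmul (mon ?x) (reynolds (mon ?y))))"
    by (intro reynolds_cong_mod[OF rels_FA action_stable_Brels]) (simp_all add: pmul_mon_mon)
  ultimately have "low_generated (reynolds (mon (?x @ ?y)))"
    by (blast intro: low_generated_cong)
  then show ?thesis
    by (rule low_generated_reynolds_assoc[OF word_assoc_sym[OF split(1)]])
qed

lemma low_generated_split_power:
  assumes IH: "\<And>v'. deg v' < deg v \<Longrightarrow> wgrade (std_word v') = ge \<Longrightarrow> low_generated_std v'"
    and v: "wgrade (std_word v) = ge" and t: "(if t \<in> {X1, X2} then 6 else 5) \<le> v t"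
  shows "low_generated_std v"
proof -
  let ?p = "power4 t" and ?q = "power4 (partner t)" and ?v' = "swap_power4 t v"
  let ?x = "std_word (v - ?p)"
  note swap = swap_power4_facts[of t v, OF t]
  note split = std_word_split[OF swap(1) v power4_facts(1,2)]
  have assoc: "word_assoc rels (?x @ std_word ?q) (std_word ?v')"
    using std_word_append[OF swap(2)] swap(3) split(3) by simp
  then have v': "wgrade (std_word ?v') = ge"
    using split(2) power4_facts(1) by (simp add: word_assoc_def wgrade_append)
  from swap(5) obtain m where m: "m \<in> {mX, mY, mZ}" "m \<le> ?v'"
    by blast
  have "low_generated_std ?v'"
    using IH swap(4) by (intro low_generated_split_balanced[OF _ v' m]) simp
  then have B: "low_generated (reynolds (mon (?x @ std_word ?q)))"
    by (rule low_generated_reynolds_assoc[OF assoc])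
  have "deg (v - ?p) < deg v"
    using deg_diff(2)[OF swap(1)] power4_facts(3) by simp
  then have "low_generated (reynolds (mon ?x))"
    using IH split(2) by blast
  moreover have "low_generated (reynolds (mon (std_word ?p)))"
    using power4_facts by (simp add: low_generated_reynolds_mon_low length_std_word)
  ultimately have P: "low_generated (reynolds (pmul (mon ?x) (reynolds (mon (std_word ?p)))))"
    by (rule low_generated_reynolds_pmul)
  have "reynolds (mon (?x @ std_word ?p)) =
      padd (psmul 2 (reynolds (pmul (mon ?x) (reynolds (mon (std_word ?p))))))
        (psmul (-1) (reynolds (mon (?x @ std_word ?q))))"
    by (simp only: std_word_power4 reynolds_pmul_power4)
       (simp add: psmul_def padd_def fun_eq_iff field_simps)
  then have "low_generated (reynolds (mon (?x @ std_word ?p)))"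
    using P B by (simp add: low_generated_padd low_generated_psmul)
  then show ?thesis
    by (rule low_generated_reynolds_assoc[OF word_assoc_sym[OF split(1)]])
qed

lemma low_generated_std_word: "wgrade (std_word v) = ge \<Longrightarrow> low_generated_std v"
proof (induction "deg v" arbitrary: v rule: less_induct)
  case less
  have IH: "\<And>v'. deg v' < deg v \<Longrightarrow> wgrade (std_word v') = ge \<Longrightarrow> low_generated_std v'"
    using less.hyps by blast
  consider "deg v \<le> 14" | m where "m \<in> {mX, mY, mZ}" "m \<le> v"
    | t where "(if t \<in> {X1, X2} then 6 else 5) \<le> v t"
    using degree_cases by blast
  then show ?case
  proof cases
    case 1
    then show ?thesis
      using less.prems by (simp add: low_generated_reynolds_mon_low length_std_word)
  next
    case (2 m)
    then show ?thesis
      using low_generated_split_balanced[OF IH less.prems] by blast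
  next
    case (3 t)
    then show ?thesis
      using low_generated_split_power[OF IH less.prems] by blast
  qed
qed

lemma low_generated_reynolds_mon: "wgrade w = ge \<Longrightarrow> low_generated (reynolds (mon w))"
proof -
  assume w: "wgrade w = ge"
  obtain v where assoc: "word_assoc rels w (std_word v)"
    using word_assoc_std_word by blast
  with w have "wgrade (std_word v) = ge"
    by (simp add: word_assoc_def)
  then show ?thesis
    by (rule low_generated_reynolds_assoc[OF assoc low_generated_std_word])
qed

lemma low_generated_reynolds_unit_grade:
  "F \<in> FA \<Longrightarrow> (\<forall>w. F w \<noteq> 0 \<longrightarrow> wgrade w = ge) \<Longrightarrow> low_generated (reynolds F)"
proof (induction rule: FA_induct)
  case zero
  show ?case by (simp add: low_generated_zero)
next
  case (step g w c)
  then have "wgrade w = ge" and "\<forall>x. g x \<noteq> 0 \<longrightarrow> wgrade x = ge"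
    by (auto simp: padd_def psmul_def mon_def split: if_splits)
  with step show ?case
    by (simp add: reynolds_padd reynolds_psmul low_generated_padd low_generated_psmul
        low_generated_reynolds_mon)
qed

lemma low_generated_invariant:
  assumes "Binv rels f"
  shows "low_generated f"
proof -
  have f: "f \<in> FA" and "cong_mod rels f (proj_e f)"
    and inv: "\<And>g. g \<in> Grp \<Longrightarrow> psub (act_g g f) f \<in> ideal_gen rels"
    using assms by (auto simp: Binv_def cong_mod_def)
  then have "cong_mod rels (reynolds f) (reynolds (proj_e f))"
    by (intro reynolds_cong_mod[OF rels_FA action_stable_Brels]) simp_all
  moreover have "cong_mod rels f (reynolds f)"
    using f inv by (rule cong_mod_reynolds)
  moreover have "low_generated (reynolds (proj_e f))"
    using f by (intro low_generated_reynolds_unit_grade proj_e_in_FA) (simp_all add: proj_e_def)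
  ultimately show ?thesis
    by (meson cong_mod_trans low_generated_cong)
qed

end

theorem mainTheorem10:
  fixes u1 u2 u3 u4 :: complex
  assumes "u1 \<noteq> 0" and "u2 \<noteq> 0" and "u3 \<noteq> 0" and "u4 \<noteq> 0"
    and "u3 ^ 16 = u4 ^ 16"
  shows "\<forall>f. Binv (Brels 1 1 (-1) u1 u2 u3 u4) f \<longrightarrow>
           (\<exists>h \<in> subalg {h. h \<in> FA \<and> Binv (Brels 1 1 (-1) u1 u2 u3 u4) h \<and> (\<exists>d\<le>14. homog d h)}.
              psub f h \<in> ideal_gen (Brels 1 1 (-1) u1 u2 u3 u4))"
proof -
  interpret B_algebra u1 u2 u3 u4
    using assms(1-4) by unfold_locales
  show ?thesis
    using low_generated_invariant
    unfolding low_generated_def low_invariants_def cong_mod_def by blast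
qed

end
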